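(* Let $N\ge 3$, write $N=2g+1$ or $N=2g+2$ with $g\ge 1$, and let $(v_n(x))_{n\in\mathbf Z}$ be a solution of the $N$-periodic dressing chain (see context). Let $T(\lambda)=\begin{pmatrix}A(\lambda)&B(\lambda)\\ C(\lambda)&D(\lambda)\end{pmatrix}$ be its transition matrix, $P(\lambda)=\operatorname{Tr}T(\lambda)$, $Q(\lambda)=\det T(\lambda)$. Suppose that, at the values of $x$ considered, the $g$ zeros $\lambda_1,\dots,\lambda_g$ of $B(\lambda)$ are pairwise distinct (and depend differentiably on $x$), and put $z_j=A(\lambda_j)$, assumed nonzero. Then for $j=1,\dots,g$, $$\dot\lambda_j=\frac{z_j-Q(\lambda_j)z_j^{-1}}{B'(\lambda_j)},\qquad \dot z_j=\frac{P'(\lambda_j)z_j-Q'(\lambda_j)}{B'(\lambda_j)},$$ where the dot denotes $d/dx$ and the prime denotes $\partial/\partial\lambda$.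
   Context: Fix constants $\alpha_1,\dots,\alpha_N$, extended $N$-periodically ($\alpha_{n+N}=\alpha_n$); put $\alpha=\sum_{n=1}^N\alpha_n$, $\beta_n=\alpha_1+\cdots+\alpha_n$, $\beta_0=0$. A solution of the $N$-periodic dressing chain is a family of functions $v_n(x)$, $n\in\mathbf Z$, with $v_{n+N}=v_n$ and $\dot v_n+\dot v_{n+1}=v_{n+1}^2-v_n^2+\alpha_n$ for all $n$. Put $v=v_1+\cdots+v_N$ (then $\dot v=\alpha/2$). Let $V_n(\lambda)=\begin{pmatrix}v_n&1\\ \lambda+v_n^2&v_n\end{pmatrix}$ and define the transition matrix $T(\lambda)=V_N(\lambda+\beta_{N-1})\cdots V_2(\lambda+\beta_1)V_1(\lambda)$. Then $Q(\lambda)=\det T(\lambda)=(-1)^N\lambda\prod_{n=1}^{N-1}(\lambda+\beta_n)$, and $B(\lambda)$ is a polynomial of degree $g$ with leading coefficient $b_0=1$ if $N=2g+1$ and $b_0=v$ if $N=2g+2$. *)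

theory Defs
  imports "HOL-Analysis.Analysis"
begin

definition mat2 :: "complex \<Rightarrow> complex \<Rightarrow> complex \<Rightarrow> complex \<Rightarrow> complex^2^2" where
  "mat2 a b c d = (\<chi> i j. if i = 1 then (if j = 1 then a else b) else (if j = 1 then c else d))"

definition dbeta :: "(nat \<Rightarrow> complex) \<Rightarrow> nat \<Rightarrow> complex" where
  "dbeta \<alpha> n = (\<Sum>k=1..n. \<alpha> k)"

definition Vmat :: "(nat \<Rightarrow> real \<Rightarrow> complex) \<Rightarrow> nat \<Rightarrow> complex \<Rightarrow> real \<Rightarrow> complex^2^2" where
  "Vmat v n lam x = mat2 (v n x) 1 (lam + (v n x)^2) (v n x)"

fun Tpart :: "(nat \<Rightarrow> complex) \<Rightarrow> (nat \<Rightarrow> real \<Rightarrow> complex) \<Rightarrow> nat \<Rightarrow> complex \<Rightarrow> real \<Rightarrow> complex^2^2" where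
  "Tpart \<alpha> v 0 lam x = mat 1"
| "Tpart \<alpha> v (Suc k) lam x = Vmat v (Suc k) (lam + dbeta \<alpha> k) x ** Tpart \<alpha> v k lam x"

definition Tmat :: "(nat \<Rightarrow> complex) \<Rightarrow> (nat \<Rightarrow> real \<Rightarrow> complex) \<Rightarrow> nat \<Rightarrow> complex \<Rightarrow> real \<Rightarrow> complex^2^2" where
  "Tmat \<alpha> v N lam x = Tpart \<alpha> v N lam x"

definition Aent where "Aent \<alpha> v N lam x = Tmat \<alpha> v N lam x $ 1 $ 1"
definition Bent where "Bent \<alpha> v N lam x = Tmat \<alpha> v N lam x $ 1 $ 2"
definition Cent where "Cent \<alpha> v N lam x = Tmat \<alpha> v N lam x $ 2 $ 1"
definition Dent where "Dent \<alpha> v N lam x = Tmat \<alpha> v N lam x $ 2 $ 2"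

definition Ptr where "Ptr \<alpha> v N lam x = Aent \<alpha> v N lam x + Dent \<alpha> v N lam x"
definition Qdet where "Qdet \<alpha> v N lam x = det (Tmat \<alpha> v N lam x)"

definition dressing_chain :: "nat \<Rightarrow> (nat \<Rightarrow> complex) \<Rightarrow> (nat \<Rightarrow> real \<Rightarrow> complex) \<Rightarrow> bool" where
  "dressing_chain N \<alpha> v \<longleftrightarrow>
     (\<forall>n. \<alpha> (n + N) = \<alpha> n) \<and> (\<forall>n x. v (n + N) x = v n x) \<and>
     (\<forall>n x. v n differentiable (at x)) \<and>
     (\<forall>n x. vector_derivative (v n) (at x) + vector_derivative (v (Suc n)) (at x)
            = (v (Suc n) x)^2 - (v n x)^2 + \<alpha> n)"

end

theory Submission
  imports Defs "HOL-Computational_Algebra.Polynomial"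
begin

text \<open>
  Put \<open>U\<^sub>n(\<lambda>) = [[0, 1], [\<lambda> + v\<^sub>n\<^sup>2 - v\<^sub>n', 0]]\<close>. The dressing chain is exactly the
  zero-curvature relation \<open>V\<^sub>n' = U\<^sub>n\<^sub>+\<^sub>1(\<lambda> + \<alpha>\<^sub>n) V\<^sub>n - V\<^sub>n U\<^sub>n(\<lambda>)\<close>, so by the product rule the
  terms telescope and, along any curve \<open>\<lambda> = L(x)\<close>,
  \<open>d/dx T(L, x) = U\<^sub>N\<^sub>+\<^sub>1(L + \<beta>\<^sub>N) T - T U\<^sub>1(L) + L' \<partial>\<^sub>\<lambda>T\<close>.
  The first row reads \<open>d/dx B = D - A + L' B'\<close> and \<open>d/dx A = C - B (L + v\<^sub>1\<^sup>2 - v\<^sub>1') + L' A'\<close>.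
  Along a zero \<open>\<lambda>\<^sub>j\<close> of \<open>B\<close> the left side of the first equation vanishes and \<open>Q = AD\<close>;
  solving for \<open>\<lambda>\<^sub>j'\<close> and substituting into the second gives both formulas. Division by
  \<open>B'(\<lambda>\<^sub>j)\<close> is legitimate because \<open>B\<close> has degree at most \<open>g\<close> and \<open>g\<close> distinct zeros.
\<close>

lemma mat2_nth [simp]:
  "mat2 a b c d $ 1 $ 1 = a" "mat2 a b c d $ 1 $ 2 = b" "mat2 a b c d $ 2 $ 1 = c" "mat2 a b c d $ 2 $ 2 = d"
  by (simp_all add: mat2_def)

definition poly_mat :: "'a::comm_semiring_1 poly^'n^'m \<Rightarrow> 'a \<Rightarrow> 'a^'n^'m" where
  "poly_mat M l = (\<chi> i j. poly (M $ i $ j) l)"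

definition pderiv_mat :: "'a::idom poly^'n^'m \<Rightarrow> 'a poly^'n^'m" where
  "pderiv_mat M = (\<chi> i j. pderiv (M $ i $ j))"

lemma poly_mat_1 [simp]: "poly_mat (mat 1) l = mat 1"
  by (simp add: poly_mat_def mat_def vec_eq_iff)

lemma poly_mat_add: "poly_mat (A + B) l = poly_mat A l + poly_mat B l"
  by (simp add: poly_mat_def vec_eq_iff)

lemma poly_mat_mult: "poly_mat (A ** B) l = poly_mat A l ** poly_mat B l"
  by (simp add: poly_mat_def matrix_matrix_mult_def vec_eq_iff poly_sum)

lemma pderiv_sum: "pderiv (sum f A) = (\<Sum>x\<in>A. pderiv (f x))"
  using higher_pderiv_sum[of 1 f A] by simp

lemma pderiv_mat_mult: "pderiv_mat (A ** B) = pderiv_mat A ** B + A ** pderiv_mat B"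
  by (simp add: pderiv_mat_def matrix_matrix_mult_def vec_eq_iff pderiv_sum pderiv_mult
      sum.distrib algebra_simps)

text \<open>
  Entry \<open>(i, j)\<close> of a product of \<open>k\<close> factors \<open>V\<^sub>n\<close> has degree at most
  \<open>(k + w\<^sub>i - w\<^sub>j) / 2\<close> in \<open>\<lambda>\<close>: with \<open>\<lambda> = \<mu>\<^sup>2\<close>, conjugating \<open>V\<^sub>n\<close> by \<open>diag(1, \<mu>)\<close> makes it
  linear in \<open>\<mu>\<close>. The alternative \<open>= 0\<close> is needed for the entry \<open>(1, 2)\<close> of the identity.
\<close>

definition index_weight :: "2 \<Rightarrow> nat" where
  "index_weight i = (if i = 1 then 0 else 1)"

definition weighted_degree_le :: "nat \<Rightarrow> 'a::idom poly^2^2 \<Rightarrow> bool" where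
  "weighted_degree_le k M \<longleftrightarrow>
     (\<forall>i j. M $ i $ j = 0 \<or> 2 * degree (M $ i $ j) + index_weight j \<le> k + index_weight i)"

lemma zero_or_degree_add:
  assumes "p = 0 \<or> 2 * degree p + c \<le> d" "q = 0 \<or> 2 * degree q + c \<le> d"
  shows "p + q = 0 \<or> 2 * degree (p + q) + c \<le> d"
  using assms degree_add_le_max[of p q] by (cases "p = 0"; cases "q = 0") auto

lemma zero_or_degree_mult:
  assumes "p = 0 \<or> 2 * degree p + c \<le> d" "q = 0 \<or> 2 * degree q + c' \<le> d'"
  shows "p * q = 0 \<or> 2 * degree (p * q) + c' \<le> d + d' - c"
  using assms degree_mult_le[of p q] by (cases "p = 0"; cases "q = 0") auto

lemma weighted_degree_le_mult:
  assumes "weighted_degree_le k A" "weighted_degree_le l B"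
  shows "weighted_degree_le (k + l) (A ** B)"
  unfolding weighted_degree_le_def
proof (intro allI)
  fix i j
  have "A $ i $ m * B $ m $ j = 0 \<or>
      2 * degree (A $ i $ m * B $ m $ j) + index_weight j \<le> k + l + index_weight i" for m
    using zero_or_degree_mult[of "A $ i $ m" "index_weight m" "k + index_weight i"
        "B $ m $ j" "index_weight j" "l + index_weight m"] assms
    unfolding weighted_degree_le_def by (simp add: algebra_simps)
  then show "(A ** B) $ i $ j = 0 \<or>
      2 * degree ((A ** B) $ i $ j) + index_weight j \<le> k + l + index_weight i"
    unfolding matrix_matrix_mult_def sum_2 by (simp add: zero_or_degree_add)
qed

lemma simple_root_if_degree_le_card_roots:
  fixes p :: "'a::idom poly"
  assumes "p \<noteq> 0" and "degree p \<le> card {x. poly p x = 0}" and "poly p a = 0"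
  shows "poly (pderiv p) a \<noteq> 0"
proof
  assume "poly (pderiv p) a = 0"
  obtain q where p: "p = [:- a, 1:] * q"
    using \<open>poly p a = 0\<close> by (metis dvdE poly_eq_0_iff_dvd)
  have "q \<noteq> 0"
    using \<open>p \<noteq> 0\<close> p by auto
  have "pderiv p = [:- a, 1:] * pderiv q + q"
    unfolding p pderiv_mult by (simp add: pderiv_pCons)
  with \<open>poly (pderiv p) a = 0\<close> have "{x. poly p x = 0} \<subseteq> {x. poly q x = 0}"
    by (auto simp: p)
  then have "card {x. poly p x = 0} \<le> card {x. poly q x = 0}"
    by (intro card_mono poly_roots_finite \<open>q \<noteq> 0\<close>)
  also have "\<dots> \<le> degree q"
    using \<open>q \<noteq> 0\<close> by (rule card_poly_roots_bound)
  also have "\<dots> < degree p"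
    unfolding p using \<open>q \<noteq> 0\<close> by (subst degree_mult_eq) auto
  finally show False
    using assms(2) by simp
qed

definition has_entrywise_derivative ::
    "(real \<Rightarrow> 'a::real_normed_vector^'n^'m) \<Rightarrow> 'a^'n^'m \<Rightarrow> real \<Rightarrow> bool" where
  "has_entrywise_derivative F F' x \<longleftrightarrow>
     (\<forall>i j. ((\<lambda>y. F y $ i $ j) has_vector_derivative F' $ i $ j) (at x))"

lemma has_entrywise_derivative_const: "has_entrywise_derivative (\<lambda>y. M) 0 x"
  by (simp add: has_entrywise_derivative_def)

lemma has_entrywise_derivative_mult:
  fixes F :: "real \<Rightarrow> 'a::real_normed_algebra_1^'k^'m" and G :: "real \<Rightarrow> 'a^'n^'k"
  assumes "has_entrywise_derivative F F' x" "has_entrywise_derivative G G' x"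
  shows "has_entrywise_derivative (\<lambda>y. F y ** G y) (F' ** G x + F x ** G') x"
  unfolding has_entrywise_derivative_def
proof (intro allI)
  fix i j
  have "((\<lambda>y. \<Sum>k\<in>UNIV. F y $ i $ k * G y $ k $ j) has_vector_derivative
      (\<Sum>k\<in>UNIV. F x $ i $ k * G' $ k $ j + F' $ i $ k * G x $ k $ j)) (at x)"
    using assms unfolding has_entrywise_derivative_def
    by (intro has_vector_derivative_sum has_vector_derivative_mult) auto
  then show "((\<lambda>y. (F y ** G y) $ i $ j) has_vector_derivative (F' ** G x + F x ** G') $ i $ j) (at x)"
    by (simp add: matrix_matrix_mult_def sum.distrib add.commute)
qed

definition Vpoly :: "(nat \<Rightarrow> real \<Rightarrow> complex) \<Rightarrow> nat \<Rightarrow> complex \<Rightarrow> real \<Rightarrow> complex poly^2^2" where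
  "Vpoly v n mu x = (\<chi> i j. [:Vmat v n mu x $ i $ j, if i = 2 \<and> j = 1 then 1 else 0:])"

fun Tpoly :: "(nat \<Rightarrow> complex) \<Rightarrow> (nat \<Rightarrow> real \<Rightarrow> complex) \<Rightarrow> nat \<Rightarrow> real \<Rightarrow> complex poly^2^2" where
  "Tpoly \<alpha> v 0 x = mat 1"
| "Tpoly \<alpha> v (Suc k) x = Vpoly v (Suc k) (dbeta \<alpha> k) x ** Tpoly \<alpha> v k x"

lemma poly_mat_Vpoly: "poly_mat (Vpoly v n mu x) l = Vmat v n (l + mu) x"
  by (simp add: poly_mat_def Vpoly_def Vmat_def vec_eq_iff forall_2)

lemma poly_mat_pderiv_mat_Vpoly: "poly_mat (pderiv_mat (Vpoly v n mu x)) l = mat2 0 0 1 0"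
  by (simp add: poly_mat_def pderiv_mat_def Vpoly_def pderiv_pCons vec_eq_iff forall_2)

lemma poly_mat_Tpoly: "poly_mat (Tpoly \<alpha> v k x) l = Tpart \<alpha> v k l x"
  by (induction k) (simp_all add: poly_mat_mult poly_mat_Vpoly)

lemma weighted_degree_le_Vpoly: "weighted_degree_le 1 (Vpoly v n mu x)"
  unfolding weighted_degree_le_def forall_2 by (simp add: Vpoly_def index_weight_def)

lemma weighted_degree_le_Tpoly: "weighted_degree_le k (Tpoly \<alpha> v k x)"
proof (induction k)
  case 0
  show ?case
    by (simp add: weighted_degree_le_def mat_def index_weight_def forall_2)
next
  case (Suc k)
  then show ?case
    using weighted_degree_le_mult[OF weighted_degree_le_Vpoly] by simp
qed

lemma degree_Tpoly_12: "degree (Tpoly \<alpha> v k x $ 1 $ 2) \<le> (k - 1) div 2"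
proof -
  have "Tpoly \<alpha> v k x $ 1 $ 2 = 0 \<or>
      2 * degree (Tpoly \<alpha> v k x $ 1 $ 2) + index_weight 2 \<le> k + index_weight 1"
    using weighted_degree_le_Tpoly[of k \<alpha> v x] unfolding weighted_degree_le_def by blast
  then show ?thesis
    by (auto simp: index_weight_def)
qed

lemma Bent_eq_poly: "Bent \<alpha> v N l x = poly (Tpoly \<alpha> v N x $ 1 $ 2) l"
  by (simp add: Bent_def Tmat_def poly_mat_Tpoly[symmetric] poly_mat_def)

lemma Bent_simple_zeros:
  assumes g: "N = 2*g + 1 \<or> N = 2*g + 2"
    and zeros: "{l. Bent \<alpha> v N l x = 0} = f ` {1..g}" and inj: "inj_on f {1..g}"
    and j: "j \<in> {1..g}"
  shows "deriv (\<lambda>l. Bent \<alpha> v N l x) (f j) \<noteq> 0"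
proof -
  define p where "p = Tpoly \<alpha> v N x $ 1 $ 2"
  have roots: "{l. poly p l = 0} = f ` {1..g}"
    using zeros by (simp add: p_def Bent_eq_poly)
  have "p \<noteq> 0"
  proof
    assume "p = 0"
    then have "UNIV = f ` {1..g}"
      using roots by simp
    then have "finite (UNIV :: complex set)"
      by (metis finite_atLeastAtMost finite_imageI)
    then show False
      by (simp add: infinite_UNIV_char_0)
  qed
  moreover have "degree p \<le> card {l. poly p l = 0}"
  proof -
    have "degree p \<le> g"
      using degree_Tpoly_12[of \<alpha> v N x] g by (auto simp: p_def)
    also have "g = card {l. poly p l = 0}"
      using inj by (simp add: roots card_image)
    finally show ?thesis .
  qed
  moreover have "poly p (f j) = 0"
    using roots j by auto
  ultimately have "poly (pderiv p) (f j) \<noteq> 0"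
    by (rule simple_root_if_degree_le_card_roots)
  then show ?thesis
    by (simp add: Bent_eq_poly p_def DERIV_imp_deriv[OF poly_DERIV])
qed

definition dTpart :: "(nat \<Rightarrow> complex) \<Rightarrow> (nat \<Rightarrow> real \<Rightarrow> complex) \<Rightarrow> nat \<Rightarrow> complex \<Rightarrow> real \<Rightarrow> complex^2^2" where
  "dTpart \<alpha> v k l x = (\<chi> i j. deriv (\<lambda>\<mu>. Tpart \<alpha> v k \<mu> x $ i $ j) l)"

lemma Tpart_has_poly_derivative:
  "((\<lambda>\<mu>. Tpart \<alpha> v k \<mu> x $ i $ j) has_field_derivative poly_mat (pderiv_mat (Tpoly \<alpha> v k x)) l $ i $ j) (at l)"
  unfolding poly_mat_Tpoly[symmetric] by (simp add: poly_mat_def pderiv_mat_def)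

lemma dTpart_eq_poly_mat: "dTpart \<alpha> v k l x = poly_mat (pderiv_mat (Tpoly \<alpha> v k x)) l"
  by (simp add: dTpart_def vec_eq_iff DERIV_imp_deriv[OF Tpart_has_poly_derivative])

lemma Tpart_has_field_derivative:
  "((\<lambda>\<mu>. Tpart \<alpha> v k \<mu> x $ i $ j) has_field_derivative dTpart \<alpha> v k l x $ i $ j) (at l)"
  using Tpart_has_poly_derivative by (simp add: dTpart_eq_poly_mat)

lemma dTpart_0: "dTpart \<alpha> v 0 l x = 0"
  by (simp add: dTpart_eq_poly_mat pderiv_mat_def poly_mat_def mat_def vec_eq_iff)

lemma dTpart_Suc:
  "dTpart \<alpha> v (Suc k) l x
     = mat2 0 0 1 0 ** Tpart \<alpha> v k l x + Vmat v (Suc k) (l + dbeta \<alpha> k) x ** dTpart \<alpha> v k l x"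
  by (simp add: dTpart_eq_poly_mat pderiv_mat_mult poly_mat_add poly_mat_mult poly_mat_Tpoly
      poly_mat_Vpoly poly_mat_pderiv_mat_Vpoly)

lemma Tmat_entry_has_field_derivative:
  "((\<lambda>\<mu>. Tmat \<alpha> v N \<mu> x $ i $ j) has_field_derivative deriv (\<lambda>\<mu>. Tmat \<alpha> v N \<mu> x $ i $ j) l) (at l)"
  using Tpart_has_field_derivative by (simp add: Tmat_def dTpart_def)

lemma Qdet_eq: "Qdet \<alpha> v N l x = Aent \<alpha> v N l x * Dent \<alpha> v N l x - Bent \<alpha> v N l x * Cent \<alpha> v N l x"
  by (simp add: Qdet_def det_2 Aent_def Bent_def Cent_def Dent_def)

lemma deriv_Ptr:
  "deriv (\<lambda>l. Ptr \<alpha> v N l x) l = deriv (\<lambda>l. Aent \<alpha> v N l x) l + deriv (\<lambda>l. Dent \<alpha> v N l x) l"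
  unfolding Ptr_def Aent_def Dent_def
  by (intro DERIV_imp_deriv DERIV_add Tmat_entry_has_field_derivative)

lemma deriv_Qdet:
  "deriv (\<lambda>l. Qdet \<alpha> v N l x) l
     = deriv (\<lambda>l. Aent \<alpha> v N l x) l * Dent \<alpha> v N l x + Aent \<alpha> v N l x * deriv (\<lambda>l. Dent \<alpha> v N l x) l
       - (deriv (\<lambda>l. Bent \<alpha> v N l x) l * Cent \<alpha> v N l x + Bent \<alpha> v N l x * deriv (\<lambda>l. Cent \<alpha> v N l x) l)"
proof -
  note entry = Tmat_entry_has_field_derivative[of \<alpha> v N x]
  show ?thesis
    unfolding Qdet_eq Aent_def Bent_def Cent_def Dent_def
    by (simp add: DERIV_imp_deriv[OF DERIV_diff[OF DERIV_mult[OF entry entry] DERIV_mult[OF entry entry]]]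
        algebra_simps)
qed

definition Umat :: "(nat \<Rightarrow> real \<Rightarrow> complex) \<Rightarrow> nat \<Rightarrow> complex \<Rightarrow> real \<Rightarrow> complex^2^2" where
  "Umat v n mu x = mat2 0 1 (mu + (v n x)^2 - vector_derivative (v n) (at x)) 0"

lemma dressing_chain_has_vector_derivative:
  assumes "dressing_chain N \<alpha> v"
  shows "(v n has_vector_derivative vector_derivative (v n) (at x)) (at x)"
  using assms unfolding dressing_chain_def by (simp add: vector_derivative_works[symmetric])

lemma Vmat_zero_curvature:
  fixes n :: nat and x :: real
  assumes "dressing_chain N \<alpha> v"
  defines "v' \<equiv> vector_derivative (v n) (at x)"
  shows "Umat v (Suc n) (mu + \<alpha> n) x ** Vmat v n mu x - Vmat v n mu x ** Umat v n mu x
       = mat2 v' 0 (2 * v n x * v') v'"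
proof -
  have "v' + vector_derivative (v (Suc n)) (at x) = (v (Suc n) x)^2 - (v n x)^2 + \<alpha> n"
    using assms(1) unfolding dressing_chain_def v'_def by blast
  then have "vector_derivative (v (Suc n)) (at x) = (v (Suc n) x)^2 - (v n x)^2 + \<alpha> n - v'"
    by (simp add: eq_diff_eq add.commute)
  then show ?thesis
    unfolding v'_def
    by (simp add: Umat_def Vmat_def matrix_matrix_mult_def sum_2 vec_eq_iff forall_2)
       (simp add: mat2_def algebra_simps power2_eq_square)
qed

lemma Vmat_curve_derivative:
  assumes chain: "dressing_chain N \<alpha> v" and L: "(L has_vector_derivative L') (at x)"
  shows "has_entrywise_derivative (\<lambda>y. Vmat v n (L y + mu) y)
     (Umat v (Suc n) (L x + mu + \<alpha> n) x ** Vmat v n (L x + mu) x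
      - Vmat v n (L x + mu) x ** Umat v n (L x + mu) x + mat L' ** mat2 0 0 1 0) x"
proof -
  let ?v' = "vector_derivative (v n) (at x)"
  have v: "(v n has_vector_derivative ?v') (at x)"
    using chain by (rule dressing_chain_has_vector_derivative)
  have "((\<lambda>y. L y + mu + v n y * v n y) has_vector_derivative L' + 0 + (v n x * ?v' + ?v' * v n x)) (at x)"
    by (intro has_vector_derivative_add has_vector_derivative_mult L v has_vector_derivative_const)
  then have "((\<lambda>y. L y + mu + v n y * v n y) has_vector_derivative L' + 2 * v n x * ?v') (at x)"
    by (simp add: algebra_simps)
  then have "has_entrywise_derivative (\<lambda>y. Vmat v n (L y + mu) y) (mat2 ?v' 0 (L' + 2 * v n x * ?v') ?v') x"
    using v unfolding has_entrywise_derivative_def forall_2 Vmat_def mat2_nth power2_eq_square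
    by simp
  also have "mat2 ?v' 0 (L' + 2 * v n x * ?v') ?v' = mat2 ?v' 0 (2 * v n x * ?v') ?v' + mat L' ** mat2 0 0 1 0"
    by (simp add: mat2_def mat_def matrix_matrix_mult_def sum_2 vec_eq_iff forall_2)
  finally show ?thesis
    by (simp add: Vmat_zero_curvature[OF chain])
qed

lemma Tpart_curve_derivative:
  assumes chain: "dressing_chain N \<alpha> v" and L: "(L has_vector_derivative L') (at x)"
  shows "has_entrywise_derivative (\<lambda>y. Tpart \<alpha> v k (L y) y)
     (Umat v (Suc k) (L x + dbeta \<alpha> k) x ** Tpart \<alpha> v k (L x) x
      - Tpart \<alpha> v k (L x) x ** Umat v 1 (L x) x + mat L' ** dTpart \<alpha> v k (L x) x) x"
proof (induction k)
  case 0
  show ?case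
    using has_entrywise_derivative_const[of "mat 1" x] by (simp add: dTpart_0 dbeta_def)
next
  case (Suc k)
  define V where "V = Vmat v (Suc k) (L x + dbeta \<alpha> k) x"
  define T where "T = Tpart \<alpha> v k (L x) x"
  define dT where "dT = dTpart \<alpha> v k (L x) x"
  define U1 where "U1 = Umat v 1 (L x) x"
  define U where "U = Umat v (Suc k) (L x + dbeta \<alpha> k) x"
  define U' where "U' = Umat v (Suc (Suc k)) (L x + dbeta \<alpha> (Suc k)) x"
  have "has_entrywise_derivative (\<lambda>y. Vmat v (Suc k) (L y + dbeta \<alpha> k) y ** Tpart \<alpha> v k (L y) y)
      ((U' ** V - V ** U + mat L' ** mat2 0 0 1 0) ** T + V ** (U ** T - T ** U1 + mat L' ** dT)) x"
    using has_entrywise_derivative_mult[OF Vmat_curve_derivative[OF chain L] Suc.IH]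
    by (simp add: U'_def V_def U_def T_def U1_def dT_def dbeta_def add.assoc)
  also have "(U' ** V - V ** U + mat L' ** mat2 0 0 1 0) ** T + V ** (U ** T - T ** U1 + mat L' ** dT)
      = U' ** (V ** T) - (V ** T) ** U1 + mat L' ** (mat2 0 0 1 0 ** T + V ** dT)"
    by (simp add: mat_def matrix_matrix_mult_def sum_2 vec_eq_iff forall_2 algebra_simps)
  finally show ?case
    by (simp add: U'_def V_def T_def U1_def dT_def dTpart_Suc)
qed

lemma Bent_curve_derivative:
  assumes "dressing_chain N \<alpha> v" and "(L has_vector_derivative L') (at x)"
  shows "((\<lambda>y. Bent \<alpha> v N (L y) y) has_vector_derivative
           Dent \<alpha> v N (L x) x - Aent \<alpha> v N (L x) x + L' * deriv (\<lambda>l. Bent \<alpha> v N l x) (L x)) (at x)"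
  using Tpart_curve_derivative[OF assms, of N, unfolded has_entrywise_derivative_def, rule_format, of 1 2]
  by (simp add: Aent_def Bent_def Dent_def Tmat_def Umat_def dTpart_def matrix_matrix_mult_def sum_2 mat_def)

lemma Aent_curve_derivative:
  assumes "dressing_chain N \<alpha> v" and "(L has_vector_derivative L') (at x)"
  shows "((\<lambda>y. Aent \<alpha> v N (L y) y) has_vector_derivative
           Cent \<alpha> v N (L x) x - Bent \<alpha> v N (L x) x * (L x + (v 1 x)^2 - vector_derivative (v 1) (at x))
           + L' * deriv (\<lambda>l. Aent \<alpha> v N l x) (L x)) (at x)"
  using Tpart_curve_derivative[OF assms, of N, unfolded has_entrywise_derivative_def, rule_format, of 1 1]
  by (simp add: Aent_def Bent_def Cent_def Tmat_def Umat_def dTpart_def matrix_matrix_mult_def sum_2 mat_def)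

lemma Bent_zero_curve_motion:
  assumes chain: "dressing_chain N \<alpha> v" and L: "(L has_vector_derivative L') (at x)"
    and S: "open S" "x \<in> S" and on_zeros: "\<forall>y\<in>S. Bent \<alpha> v N (L y) y = 0"
    and "deriv (\<lambda>l. Bent \<alpha> v N l x) (L x) \<noteq> 0" and "Aent \<alpha> v N (L x) x \<noteq> 0"
  shows "(L has_vector_derivative
           (Aent \<alpha> v N (L x) x - Qdet \<alpha> v N (L x) x / Aent \<alpha> v N (L x) x)
           / deriv (\<lambda>l. Bent \<alpha> v N l x) (L x)) (at x)"
    and "((\<lambda>y. Aent \<alpha> v N (L y) y) has_vector_derivative
           (deriv (\<lambda>l. Ptr \<alpha> v N l x) (L x) * Aent \<alpha> v N (L x) x - deriv (\<lambda>l. Qdet \<alpha> v N l x) (L x))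
           / deriv (\<lambda>l. Bent \<alpha> v N l x) (L x)) (at x)"
proof -
  define a where "a = Aent \<alpha> v N (L x) x"
  define b where "b = Bent \<alpha> v N (L x) x"
  define c where "c = Cent \<alpha> v N (L x) x"
  define d where "d = Dent \<alpha> v N (L x) x"
  define da where "da = deriv (\<lambda>l. Aent \<alpha> v N l x) (L x)"
  define db where "db = deriv (\<lambda>l. Bent \<alpha> v N l x) (L x)"
  define dd where "dd = deriv (\<lambda>l. Dent \<alpha> v N l x) (L x)"
  have "b = 0" "db \<noteq> 0" "a \<noteq> 0"
    using on_zeros S(2) assms(6,7) by (simp_all add: a_def b_def db_def)
  have "((\<lambda>y. 0) has_vector_derivative d - a + L' * db) (at x)"
    unfolding a_def d_def db_def using Bent_curve_derivative[OF chain L]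
    by (rule has_vector_derivative_transform_within_open[OF _ S]) (simp add: on_zeros)
  then have "d - a + L' * db = 0"
    using vector_derivative_unique_at has_vector_derivative_const by blast
  then have a_eq: "a = d + L' * db"
    by (simp add: algebra_simps)
  then have L'_eq: "L' = (a - d) / db"
    using \<open>db \<noteq> 0\<close> by simp
  show "(L has_vector_derivative (a - Qdet \<alpha> v N (L x) x / a) / db) (at x)"
    using L by (rule has_vector_derivative_eq_rhs)
      (use \<open>b = 0\<close> \<open>a \<noteq> 0\<close> in \<open>simp add: L'_eq Qdet_eq flip: a_def b_def c_def d_def\<close>)
  show "((\<lambda>y. Aent \<alpha> v N (L y) y) has_vector_derivative
      (deriv (\<lambda>l. Ptr \<alpha> v N l x) (L x) * a - deriv (\<lambda>l. Qdet \<alpha> v N l x) (L x)) / db) (at x)"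
    using Aent_curve_derivative[OF chain L] by (rule has_vector_derivative_eq_rhs)
      (use a_eq \<open>b = 0\<close> \<open>db \<noteq> 0\<close> in
        \<open>simp add: deriv_Ptr deriv_Qdet field_simps flip: a_def b_def c_def d_def da_def db_def dd_def\<close>)
qed

theorem mainTheorem1:
  fixes N g :: nat and \<alpha> :: "nat \<Rightarrow> complex" and v :: "nat \<Rightarrow> real \<Rightarrow> complex"
    and lam :: "nat \<Rightarrow> real \<Rightarrow> complex" and S :: "real set" and x0 :: real and j :: nat
  assumes N3: "N \<ge> 3"
    and g_def: "N = 2*g + 1 \<or> N = 2*g + 2"
    and chain: "dressing_chain N \<alpha> v"
    and S: "open S" "x0 \<in> S"
    and zeros: "\<forall>y\<in>S. {l. Bent \<alpha> v N l y = 0} = (\<lambda>i. lam i y) ` {1..g}"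
    and distinct: "\<forall>y\<in>S. inj_on (\<lambda>i. lam i y) {1..g}"
    and lam_diff: "\<forall>i\<in>{1..g}. lam i differentiable (at x0)"
    and z_nz: "\<forall>i\<in>{1..g}. Aent \<alpha> v N (lam i x0) x0 \<noteq> 0"
    and j: "j \<in> {1..g}"
  shows "(lam j has_vector_derivative
           ((Aent \<alpha> v N (lam j x0) x0
             - Qdet \<alpha> v N (lam j x0) x0 / Aent \<alpha> v N (lam j x0) x0)
            / deriv (\<lambda>l. Bent \<alpha> v N l x0) (lam j x0))) (at x0)
       \<and> ((\<lambda>y. Aent \<alpha> v N (lam j y) y) has_vector_derivative
           ((deriv (\<lambda>l. Ptr \<alpha> v N l x0) (lam j x0) * Aent \<alpha> v N (lam j x0) x0
             - deriv (\<lambda>l. Qdet \<alpha> v N l x0) (lam j x0))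
            / deriv (\<lambda>l. Bent \<alpha> v N l x0) (lam j x0))) (at x0)"
proof -
  define L' where "L' = vector_derivative (lam j) (at x0)"
  have L: "(lam j has_vector_derivative L') (at x0)"
    using lam_diff j unfolding L'_def by (simp add: vector_derivative_works[symmetric])
  have on_zeros: "\<forall>y\<in>S. Bent \<alpha> v N (lam j y) y = 0"
    using zeros j by blast
  have "deriv (\<lambda>l. Bent \<alpha> v N l x0) (lam j x0) \<noteq> 0"
    using Bent_simple_zeros[OF g_def zeros[rule_format, OF S(2)] distinct[rule_format, OF S(2)] j] .
  moreover have "Aent \<alpha> v N (lam j x0) x0 \<noteq> 0"
    using z_nz j by blast
  ultimately show ?thesis
    using Bent_zero_curve_motion[OF chain L S on_zeros] by blast
qed

end
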